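(* There are absolute constants $\varepsilon_0>0$ and $c_0>0$ such that, if $k\le\varepsilon_0n$, then \[ \pi(\mathcal G_{\mathrm{tr}}^c)\le e^{-c_0n}\quad\text{and}\quad\mu(\mathcal G_{\mathrm{tr}}^c)\le e^{-c_0n}. \]
   Context: $V=\mathbb F_2^k$ ($k\ge1$), $\mathrm{St}(n,k)=\{(z_1,\dots,z_n)\in V^n:\operatorname{span}(z_1,\dots,z_n)=V\}$, $\pi$ is the uniform measure on $\mathrm{St}(n,k)$ and $\mu$ the uniform measure on $V^n$. For $\xi\in V^*$, $\chi_\xi(u)=(-1)^{\xi(u)}$, $S_\xi(z)=\sum_{i=1}^n\chi_\xi(z_i)$, and $\mathcal G_{\mathrm{tr}}=\{z\in\mathrm{St}(n,k):\max_{0\ne\xi\in V^*}|S_\xi(z)|\le n/4\}$. Complements: $\pi(\mathcal G^c_{\mathrm{tr}})=1-\pi(\mathcal G_{\mathrm{tr}})$, $\mu(\mathcal G^c_{\mathrm{tr}})=1-\mu(\mathcal G_{\mathrm{tr}})$. *)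

theory Defs
  imports Complex_Main "HOL-Library.FuncSet"
begin

text \<open>V = F_2^k: vectors are functions nat \<Rightarrow> bool supported on {0..<k}
  (coordinate i is True iff it equals 1 in F_2).\<close>
definition vecs :: "nat \<Rightarrow> (nat \<Rightarrow> bool) set" where
  "vecs k = {v. \<forall>i. k \<le> i \<longrightarrow> \<not> v i}"

definition vadd :: "(nat \<Rightarrow> bool) \<Rightarrow> (nat \<Rightarrow> bool) \<Rightarrow> (nat \<Rightarrow> bool)" where
  "vadd u v = (\<lambda>i. u i \<noteq> v i)"

definition dual :: "nat \<Rightarrow> ((nat \<Rightarrow> bool) \<Rightarrow> bool) set" where
  "dual k = {\<xi>. \<forall>u\<in>vecs k. \<forall>v\<in>vecs k. \<xi> (vadd u v) = (\<xi> u \<noteq> \<xi> v)}"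

definition nonzero_functional :: "nat \<Rightarrow> ((nat \<Rightarrow> bool) \<Rightarrow> bool) \<Rightarrow> bool" where
  "nonzero_functional k \<xi> = (\<exists>u\<in>vecs k. \<xi> u)"

text \<open>Tuples (z_1,...,z_n) \<in> V^n, indexed by {0..<n}.\<close>
definition tuples :: "nat \<Rightarrow> nat \<Rightarrow> (nat \<Rightarrow> nat \<Rightarrow> bool) set" where
  "tuples n k = PiE {0..<n} (\<lambda>_. vecs k)"

text \<open>F_2-span of z_0..z_{n-1}: all linear combinations sum_{i<n} c_i z_i.\<close>
definition span2 :: "nat \<Rightarrow> (nat \<Rightarrow> nat \<Rightarrow> bool) \<Rightarrow> (nat \<Rightarrow> bool) set" where
  "span2 n z = {(\<lambda>j. odd (card {i\<in>{0..<n}. c i \<and> z i j})) | c. True}"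

definition St :: "nat \<Rightarrow> nat \<Rightarrow> (nat \<Rightarrow> nat \<Rightarrow> bool) set" where
  "St n k = {z \<in> tuples n k. span2 n z = vecs k}"

definition chi :: "((nat \<Rightarrow> bool) \<Rightarrow> bool) \<Rightarrow> (nat \<Rightarrow> bool) \<Rightarrow> real" where
  "chi \<xi> u = (if \<xi> u then -1 else 1)"

definition S_sum :: "nat \<Rightarrow> ((nat \<Rightarrow> bool) \<Rightarrow> bool) \<Rightarrow> (nat \<Rightarrow> nat \<Rightarrow> bool) \<Rightarrow> real" where
  "S_sum n \<xi> z = (\<Sum>i<n. chi \<xi> (z i))"

definition G_tr :: "nat \<Rightarrow> nat \<Rightarrow> (nat \<Rightarrow> nat \<Rightarrow> bool) set" where
  "G_tr n k = {z \<in> St n k. \<forall>\<xi>\<in>dual k. nonzero_functional k \<xi> \<longrightarrow> \<bar>S_sum n \<xi> z\<bar> \<le> real n / 4}"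

text \<open>pi(G^c) = 1 - pi(G) with pi uniform on St; mu(G^c) = 1 - mu(G) with mu uniform on V^n.\<close>
definition pi_Gc :: "nat \<Rightarrow> nat \<Rightarrow> real" where
  "pi_Gc n k = 1 - real (card (G_tr n k)) / real (card (St n k))"

definition mu_Gc :: "nat \<Rightarrow> nat \<Rightarrow> real" where
  "mu_Gc n k = 1 - real (card (G_tr n k)) / real (card (tuples n k))"

end

theory Submission
  imports Defs
begin

text \<open>
  If a tuple z lies outside G_tr, some nonzero functional xi has |S_xi(z)| > n/4: either G_tr
  itself supplies xi, or z does not span V, and then Gaussian elimination yields a nonzero vector a
  orthogonal to all z_i, so that S_xi(z) = n for xi = <a, ->. Every functional on F_2^k is of the
  form <a, ->, so a union bound over the 2^k vectors a suffices.

  For fixed nonzero xi, exactly half of V has xi = 1. Hence the weight 2^(#{i. xi(z_i)}) averages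
  (3/2)^n over V^n, and by Markov's inequality at most a fraction (3/2)^n / 2^(5n/8) of all tuples
  have more than 5n/8 coordinates with xi = 1 (likewise for xi = 0). As (3/2)^8 < 2^5, this decays
  exponentially, fast enough to absorb the factor 2^(k+1) when k <= n/200. Finally,
  pi(G_tr^c) <= mu(G_tr^c) because G_tr is contained in St.
\<close>

abbreviation zero_vec :: "nat \<Rightarrow> bool" where
  "zero_vec \<equiv> \<lambda>_. False"

definition unit_vec :: "nat \<Rightarrow> nat \<Rightarrow> bool" where
  "unit_vec j = (\<lambda>i. i = j)"

lemma unit_vec_apply [simp]: "unit_vec j i \<longleftrightarrow> i = j"
  by (simp add: unit_vec_def)

lemma odd_card_xor:
  assumes "finite X"
  shows "odd (card {x\<in>X. P x \<noteq> Q x}) \<longleftrightarrow> odd (card {x\<in>X. P x}) \<noteq> odd (card {x\<in>X. Q x})"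
proof -
  let ?A = "{x\<in>X. P x}" and ?B = "{x\<in>X. Q x}"
  have fin: "finite ?A" "finite ?B" using assms by auto
  have "card {x\<in>X. P x \<noteq> Q x} = card ((?A \<union> ?B) - (?A \<inter> ?B))"
    by (rule arg_cong[where f = card]) auto
  also have "\<dots> = card (?A \<union> ?B) - card (?A \<inter> ?B)"
    using fin by (intro card_Diff_subset) auto
  finally have "card {x\<in>X. P x \<noteq> Q x} = card (?A \<union> ?B) - card (?A \<inter> ?B)" .
  moreover have "card (?A \<inter> ?B) \<le> card (?A \<union> ?B)" using fin by (intro card_mono) auto
  moreover have "card ?A + card ?B = card (?A \<union> ?B) + card (?A \<inter> ?B)"
    using fin by (rule card_Un_Int)
  ultimately have "card ?A + card ?B = card {x\<in>X. P x \<noteq> Q x} + 2 * card (?A \<inter> ?B)"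
    by linarith
  then have "odd (card {x\<in>X. P x \<noteq> Q x}) \<longleftrightarrow> odd (card ?A + card ?B)" by simp
  then show ?thesis by simp
qed

lemma mem_vecs_iff: "v \<in> vecs k \<longleftrightarrow> {j. v j} \<subseteq> {..<k}"
  unfolding vecs_def by (auto simp: not_less[symmetric])

lemma finite_support_vecs: "v \<in> vecs k \<Longrightarrow> finite {j. v j}"
  unfolding mem_vecs_iff by (rule finite_subset) auto

lemma zero_vec_in_vecs [simp]: "zero_vec \<in> vecs k"
  unfolding vecs_def by simp

lemma unit_vec_in_vecs: "j < k \<Longrightarrow> unit_vec j \<in> vecs k"
  unfolding vecs_def by auto

lemma vadd_in_vecs: "u \<in> vecs k \<Longrightarrow> v \<in> vecs k \<Longrightarrow> vadd u v \<in> vecs k"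
  unfolding vecs_def vadd_def by auto

lemma vadd_vadd_cancel [simp]: "vadd (vadd u v) v = u"
  unfolding vadd_def by auto

lemma mem_vecs_SucD: "v \<in> vecs (Suc k) \<Longrightarrow> \<not> v k \<Longrightarrow> v \<in> vecs k"
  unfolding vecs_def by (auto simp: Suc_le_eq dest: le_neq_implies_less)

lemma vadd_in_vecs_Suc:
  "u \<in> vecs (Suc k) \<Longrightarrow> v \<in> vecs (Suc k) \<Longrightarrow> u k = v k \<Longrightarrow> vadd u v \<in> vecs k"
  by (rule mem_vecs_SucD) (auto simp: vadd_def vecs_def)

lemma vecs_eq_image_Pow: "vecs k = (\<lambda>S i. i \<in> S) ` Pow {..<k}"
proof
  show "vecs k \<subseteq> (\<lambda>S i. i \<in> S) ` Pow {..<k}"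
  proof
    fix v assume "v \<in> vecs k"
    then have "{j. v j} \<in> Pow {..<k}" by (simp add: mem_vecs_iff)
    then show "v \<in> (\<lambda>S i. i \<in> S) ` Pow {..<k}" by (intro image_eqI[of v _ "{j. v j}"]) auto
  qed
qed (auto simp: mem_vecs_iff)

lemma finite_vecs [simp]: "finite (vecs k)"
  unfolding vecs_eq_image_Pow by simp

lemma card_vecs: "card (vecs k) = 2 ^ k"
proof -
  have "inj_on (\<lambda>S i. i \<in> S) (Pow {..<k})"
    by (rule inj_onI) (simp add: fun_eq_iff set_eq_iff)
  then show ?thesis unfolding vecs_eq_image_Pow by (simp add: card_image card_Pow)
qed

lemma finite_tuples [simp]: "finite (tuples n k)"
  unfolding tuples_def by (simp add: finite_PiE)

lemma card_tuples: "card (tuples n k) = (2 ^ k) ^ n"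
  unfolding tuples_def by (simp add: card_PiE card_vecs)

lemma tuples_mem_vecs: "z \<in> tuples n k \<Longrightarrow> i < n \<Longrightarrow> z i \<in> vecs k"
  unfolding tuples_def by auto

definition dot :: "(nat \<Rightarrow> bool) \<Rightarrow> (nat \<Rightarrow> bool) \<Rightarrow> bool" where
  "dot a u \<longleftrightarrow> odd (card {j. a j \<and> u j})"

lemma dot_unit_vec [simp]: "dot a (unit_vec j) = a j" "dot (unit_vec j) a = a j"
proof -
  have "{i. a i \<and> i = j} = (if a j then {j} else {})" "{i. i = j \<and> a i} = (if a j then {j} else {})"
    by auto
  then show "dot a (unit_vec j) = a j" "dot (unit_vec j) a = a j" unfolding dot_def by simp_all
qed

lemma dot_vadd:
  assumes "a \<in> vecs k"
  shows "dot a (vadd u v) \<longleftrightarrow> dot a u \<noteq> dot a v"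
  using odd_card_xor[OF finite_support_vecs[OF assms], of u v]
  unfolding dot_def vadd_def by (simp add: conj_commute)

lemma dot_in_dual: "a \<in> vecs k \<Longrightarrow> dot a \<in> dual k"
  unfolding dual_def using dot_vadd by blast

lemma dot_fun_upd:
  assumes "a \<in> vecs k"
  shows "dot (a(k := b)) u \<longleftrightarrow> dot a u \<noteq> (b \<and> u k)"
proof -
  have fin: "finite {j. a j \<and> u j}" using finite_support_vecs[OF assms] by (rule rev_finite_subset) auto
  have notin: "k \<notin> {j. a j \<and> u j}" using assms unfolding vecs_def by auto
  have "{j. (a(k := b)) j \<and> u j} = (if b \<and> u k then insert k {j. a j \<and> u j} else {j. a j \<and> u j})"
    using notin by auto
  then show ?thesis unfolding dot_def using fin notin by auto
qed

lemma dual_vadd: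
  "\<xi> \<in> dual k \<Longrightarrow> u \<in> vecs k \<Longrightarrow> v \<in> vecs k \<Longrightarrow> \<xi> (vadd u v) \<longleftrightarrow> \<xi> u \<noteq> \<xi> v"
  unfolding dual_def by simp

lemma dual_zero_vec:
  assumes "\<xi> \<in> dual k"
  shows "\<not> \<xi> zero_vec"
proof -
  have "\<xi> (vadd zero_vec zero_vec) \<longleftrightarrow> \<xi> zero_vec \<noteq> \<xi> zero_vec"
    using dual_vadd[OF assms] by simp
  moreover have "vadd zero_vec zero_vec = zero_vec" by (simp add: vadd_def)
  ultimately show ?thesis by simp
qed

definition lincomb :: "nat set \<Rightarrow> (nat \<Rightarrow> bool) \<Rightarrow> (nat \<Rightarrow> nat \<Rightarrow> bool) \<Rightarrow> nat \<Rightarrow> bool" where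
  "lincomb I c z = (\<lambda>j. odd (card {i\<in>I. c i \<and> z i j}))"

definition span2_on :: "nat set \<Rightarrow> (nat \<Rightarrow> nat \<Rightarrow> bool) \<Rightarrow> (nat \<Rightarrow> bool) set" where
  "span2_on I z = range (\<lambda>c. lincomb I c z)"

lemma span2_eq_span2_on: "span2 n z = span2_on {0..<n} z"
  unfolding span2_def span2_on_def lincomb_def by auto

lemma lincomb_empty [simp]: "lincomb {} c z = zero_vec"
  unfolding lincomb_def by simp

lemma lincomb_insert:
  assumes "finite I" "x \<notin> I"
  shows "lincomb (insert x I) c z = (if c x then vadd (lincomb I c z) (z x) else lincomb I c z)"
proof -
  have "{i\<in>insert x I. c i \<and> z i j} =
      (if c x \<and> z x j then insert x {i\<in>I. c i \<and> z i j} else {i\<in>I. c i \<and> z i j})" for j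
    by auto
  then show ?thesis using assms unfolding lincomb_def vadd_def by (auto simp: fun_eq_iff)
qed

lemma lincomb_xor:
  assumes "finite I"
  shows "lincomb I (\<lambda>i. c i \<noteq> d i) z = vadd (lincomb I c z) (lincomb I d z)"
proof -
  have "odd (card {i\<in>I. (c i \<noteq> d i) \<and> z i j}) \<longleftrightarrow>
      odd (card {i\<in>I. c i \<and> z i j}) \<noteq> odd (card {i\<in>I. d i \<and> z i j})" for j
  proof -
    have "{i\<in>I. (c i \<noteq> d i) \<and> z i j} = {i\<in>I. (c i \<and> z i j) \<noteq> (d i \<and> z i j)}" by auto
    then show ?thesis using odd_card_xor[OF assms, of "\<lambda>i. c i \<and> z i j" "\<lambda>i. d i \<and> z i j"] by simp
  qed
  then show ?thesis unfolding lincomb_def vadd_def by (simp add: fun_eq_iff)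
qed

lemma lincomb_in_vecs:
  assumes "\<And>i. i \<in> I \<Longrightarrow> z i \<in> vecs k"
  shows "lincomb I c z \<in> vecs k"
proof -
  have empty: "{i\<in>I. c i \<and> z i j} = {}" if "k \<le> j" for j
    using assms that unfolding vecs_def by auto
  show ?thesis unfolding lincomb_def vecs_def mem_Collect_eq
    by (metis empty card.empty even_zero)
qed

lemma zero_vec_in_span2_on: "zero_vec \<in> span2_on I z"
  unfolding span2_on_def by (rule range_eqI[of _ _ "\<lambda>_. False"]) (simp add: lincomb_def)

lemma generator_in_span2_on: "i \<in> I \<Longrightarrow> z i \<in> span2_on I z"
proof -
  assume "i \<in> I"
  then have "{l\<in>I. l = i \<and> z l j} = (if z i j then {i} else {})" for j by auto
  then show ?thesis unfolding span2_on_def lincomb_def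
    by (intro range_eqI[of _ _ "\<lambda>l. l = i"]) (simp add: fun_eq_iff)
qed

lemma vadd_in_span2_on:
  assumes "finite I" "u \<in> span2_on I z" "v \<in> span2_on I z"
  shows "vadd u v \<in> span2_on I z"
proof -
  obtain c d where uv: "u = lincomb I c z" "v = lincomb I d z"
    using assms(2,3) unfolding span2_on_def by auto
  have "vadd u v = lincomb I (\<lambda>i. c i \<noteq> d i) z"
    unfolding uv by (rule lincomb_xor[OF assms(1), symmetric])
  then show ?thesis unfolding span2_on_def by (metis rangeI)
qed

lemma span2_on_subset:
  assumes "finite I" and "zero_vec \<in> W" and "\<And>u v. u \<in> W \<Longrightarrow> v \<in> W \<Longrightarrow> vadd u v \<in> W"
    and "\<And>i. i \<in> I \<Longrightarrow> z i \<in> W"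
  shows "span2_on I z \<subseteq> W"
proof -
  have "lincomb I c z \<in> W" for c
    using assms(1,4)
  proof (induction I rule: finite_induct)
    case (insert x I)
    then show ?case by (simp add: lincomb_insert assms(3))
  qed (simp add: assms(2))
  then show ?thesis unfolding span2_on_def by auto
qed

lemma dual_lincomb:
  assumes "\<xi> \<in> dual k" "finite I" "\<And>i. i \<in> I \<Longrightarrow> z i \<in> vecs k"
  shows "\<xi> (lincomb I c z) \<longleftrightarrow> odd (card {i\<in>I. c i \<and> \<xi> (z i)})"
  using assms(2,3)
proof (induction I rule: finite_induct)
  case empty
  then show ?case using dual_zero_vec[OF assms(1)] by simp
next
  case (insert x I)
  let ?S = "{i\<in>I. c i \<and> \<xi> (z i)}"
  have IH: "\<xi> (lincomb I c z) \<longleftrightarrow> odd (card ?S)" using insert.IH insert.prems by blast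
  have "lincomb I c z \<in> vecs k" "z x \<in> vecs k" using insert.prems by (auto intro: lincomb_in_vecs)
  then have additive: "\<xi> (vadd (lincomb I c z) (z x)) \<longleftrightarrow> \<xi> (lincomb I c z) \<noteq> \<xi> (z x)"
    by (rule dual_vadd[OF assms(1)])
  have "{i\<in>insert x I. c i \<and> \<xi> (z i)} = (if c x \<and> \<xi> (z x) then insert x ?S else ?S)"
    by auto
  moreover have "finite ?S" "x \<notin> ?S" using insert.hyps by auto
  ultimately show ?case
    unfolding lincomb_insert[OF insert.hyps] using IH additive by auto
qed

lemma lincomb_unit_vecs: "u \<in> vecs k \<Longrightarrow> lincomb {..<k} u unit_vec = u"
proof -
  assume "u \<in> vecs k"
  then have "{i\<in>{..<k}. u i \<and> j = i} = (if u j then {j} else {})" for j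
    unfolding vecs_def by (auto simp: not_le[symmetric])
  then show ?thesis unfolding lincomb_def by (simp add: fun_eq_iff)
qed

definition dual_vec :: "nat \<Rightarrow> ((nat \<Rightarrow> bool) \<Rightarrow> bool) \<Rightarrow> nat \<Rightarrow> bool" where
  "dual_vec k \<xi> = (\<lambda>j. j < k \<and> \<xi> (unit_vec j))"

lemma dual_vec_in_vecs: "dual_vec k \<xi> \<in> vecs k"
  unfolding dual_vec_def vecs_def by auto

lemma dual_eq_dot_dual_vec:
  assumes "\<xi> \<in> dual k" "u \<in> vecs k"
  shows "\<xi> u = dot (dual_vec k \<xi>) u"
proof -
  have "\<xi> u \<longleftrightarrow> odd (card {i\<in>{..<k}. u i \<and> \<xi> (unit_vec i)})"
    using dual_lincomb[OF assms(1), of "{..<k}" unit_vec u] lincomb_unit_vecs[OF assms(2)]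
    by (simp add: unit_vec_in_vecs)
  also have "{i\<in>{..<k}. u i \<and> \<xi> (unit_vec i)} = {j. dual_vec k \<xi> j \<and> u j}"
    unfolding dual_vec_def by auto
  finally show ?thesis unfolding dot_def .
qed

lemma dual_vec_nonzero:
  assumes "\<xi> \<in> dual k" "nonzero_functional k \<xi>"
  shows "dual_vec k \<xi> \<noteq> zero_vec"
proof
  assume zero: "dual_vec k \<xi> = zero_vec"
  obtain u where "u \<in> vecs k" "\<xi> u" using assms(2) unfolding nonzero_functional_def by blast
  then show False using dual_eq_dot_dual_vec[OF assms(1)] zero by (simp add: dot_def)
qed

definition annihilates :: "(nat \<Rightarrow> bool) \<Rightarrow> nat set \<Rightarrow> (nat \<Rightarrow> nat \<Rightarrow> bool) \<Rightarrow> bool" where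
  "annihilates a I z \<longleftrightarrow> (\<forall>i\<in>I. \<not> dot a (z i))"

definition eliminate :: "nat \<Rightarrow> nat \<Rightarrow> (nat \<Rightarrow> nat \<Rightarrow> bool) \<Rightarrow> nat \<Rightarrow> nat \<Rightarrow> bool" where
  "eliminate k p z = (\<lambda>i. if z i k then vadd (z i) (z p) else z i)"

lemma eliminate_in_vecs:
  assumes "z i \<in> vecs (Suc k)" "z p \<in> vecs (Suc k)" "z p k"
  shows "eliminate k p z i \<in> vecs k"
  using assms unfolding eliminate_def by (auto intro: vadd_in_vecs_Suc mem_vecs_SucD)

lemma span2_on_eliminate_subset:
  assumes "finite I" "p \<in> I"
  shows "span2_on (I - {p}) (eliminate k p z) \<subseteq> span2_on I z"
proof (rule span2_on_subset)
  show "vadd u v \<in> span2_on I z" if "u \<in> span2_on I z" "v \<in> span2_on I z" for u v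
    using vadd_in_span2_on[OF assms(1) that] .
  show "eliminate k p z i \<in> span2_on I z" if "i \<in> I - {p}" for i
    using that assms unfolding eliminate_def
    by (auto intro: vadd_in_span2_on generator_in_span2_on)
qed (use assms(1) zero_vec_in_span2_on in auto)

lemma annihilates_eliminate:
  assumes a: "a \<in> vecs k" and p: "p \<in> I" "z p k"
    and ann: "annihilates a (I - {p}) (eliminate k p z)"
  shows "annihilates (a(k := dot a (z p))) I z"
  unfolding annihilates_def
proof
  fix i assume i: "i \<in> I"
  show "\<not> dot (a(k := dot a (z p))) (z i)"
  proof (cases "i = p")
    case True
    then show ?thesis using p by (simp add: dot_fun_upd[OF a])
  next
    case False
    then have "\<not> dot a (eliminate k p z i)" using ann i unfolding annihilates_def by auto
    then show ?thesis
      unfolding eliminate_def by (auto simp: dot_fun_upd[OF a] dot_vadd[OF a] split: if_splits)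
  qed
qed

lemma eliminate_no_annihilator:
  assumes p: "p \<in> I" "z p k"
    and no_ann: "\<forall>a\<in>vecs (Suc k). annihilates a I z \<longrightarrow> a = zero_vec"
  shows "\<forall>a\<in>vecs k. annihilates a (I - {p}) (eliminate k p z) \<longrightarrow> a = zero_vec"
proof (intro ballI impI)
  fix a assume a: "a \<in> vecs k" and ann: "annihilates a (I - {p}) (eliminate k p z)"
  have "a(k := dot a (z p)) \<in> vecs (Suc k)" using a unfolding vecs_def by auto
  then have a'_zero: "a(k := dot a (z p)) = zero_vec"
    using annihilates_eliminate[OF a p ann] no_ann by blast
  show "a = zero_vec"
  proof
    fix j
    show "a j = False" using fun_cong[OF a'_zero, of j] a unfolding vecs_def by (auto split: if_splits)
  qed
qed

lemma vecs_subset_span2_on_if_no_annihilator: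
  assumes "finite I" "\<forall>i\<in>I. z i \<in> vecs k"
    and "\<forall>a\<in>vecs k. annihilates a I z \<longrightarrow> a = zero_vec"
  shows "vecs k \<subseteq> span2_on I z"
  using assms
proof (induction k arbitrary: I z)
  case 0
  have "vecs 0 = {zero_vec}" unfolding vecs_def by auto
  then show ?case using zero_vec_in_span2_on by auto
next
  case (Suc k)
  have "unit_vec k \<in> vecs (Suc k)" "unit_vec k \<noteq> zero_vec"
    by (auto simp: unit_vec_in_vecs fun_eq_iff)
  then have "\<not> annihilates (unit_vec k) I z" using Suc.prems(3) by blast
  then obtain p where p: "p \<in> I" "z p k" unfolding annihilates_def by auto
  have "vecs k \<subseteq> span2_on (I - {p}) (eliminate k p z)"
    using Suc.prems p by (intro Suc.IH eliminate_no_annihilator) (auto intro: eliminate_in_vecs)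
  also have "\<dots> \<subseteq> span2_on I z" by (rule span2_on_eliminate_subset[OF Suc.prems(1) p(1)])
  finally have vecs_k: "vecs k \<subseteq> span2_on I z" .
  show "vecs (Suc k) \<subseteq> span2_on I z"
  proof
    fix v assume v: "v \<in> vecs (Suc k)"
    show "v \<in> span2_on I z"
    proof (cases "v k")
      case False
      then show ?thesis using vecs_k mem_vecs_SucD[OF v] by blast
    next
      case True
      then have "vadd v (z p) \<in> span2_on I z"
        using vecs_k vadd_in_vecs_Suc[OF v] Suc.prems(2) p by blast
      then have "vadd (vadd v (z p)) (z p) \<in> span2_on I z"
        using vadd_in_span2_on generator_in_span2_on Suc.prems(1) p(1) by blast
      then show ?thesis by simp
    qed
  qed
qed

lemma annihilator_if_not_St:
  assumes "z \<in> tuples n k" "z \<notin> St n k"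
  shows "\<exists>a\<in>vecs k - {zero_vec}. annihilates a {0..<n} z"
proof (rule ccontr)
  assume "\<not> ?thesis"
  then have "vecs k \<subseteq> span2_on {0..<n} z"
    using assms(1) by (intro vecs_subset_span2_on_if_no_annihilator) (auto simp: tuples_mem_vecs)
  moreover have "span2_on {0..<n} z \<subseteq> vecs k"
    using assms(1) unfolding span2_on_def by (auto intro: lincomb_in_vecs simp: tuples_mem_vecs)
  ultimately show False using assms unfolding St_def span2_eq_span2_on by blast
qed

lemma card_filter_add_card_filter_not:
  "finite X \<Longrightarrow> card {x\<in>X. P x} + card {x\<in>X. \<not> P x} = card X"
  by (subst card_Un_disjoint[symmetric]) (auto intro: arg_cong[where f = card])

lemma S_sum_eq_card:
  "S_sum n \<xi> z = real n - 2 * real (card {i\<in>{0..<n}. \<xi> (z i)})"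
proof -
  have "S_sum n \<xi> z = (\<Sum>i\<in>{0..<n}. 1 - 2 * (if \<xi> (z i) then 1 else 0))"
    unfolding S_sum_def chi_def lessThan_atLeast0 by (intro sum.cong) auto
  also have "\<dots> = real n - 2 * (\<Sum>i\<in>{0..<n}. if \<xi> (z i) then 1 else 0)"
    by (simp add: sum_subtractf sum_distrib_left)
  also have "(\<Sum>i\<in>{0..<n}. if \<xi> (z i) then 1 else 0) = real (card {i\<in>{0..<n}. \<xi> (z i)})"
    by (simp add: sum.If_cases Int_def)
  finally show ?thesis .
qed

lemma S_sum_dual_vec:
  assumes "\<xi> \<in> dual k" "z \<in> tuples n k"
  shows "S_sum n \<xi> z = S_sum n (dot (dual_vec k \<xi>)) z"
  unfolding S_sum_def chi_def
  using dual_eq_dot_dual_vec[OF assms(1) tuples_mem_vecs[OF assms(2)]] by simp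

lemma nonzero_functional_dot:
  assumes "a \<in> vecs k" "a \<noteq> zero_vec"
  shows "nonzero_functional k (dot a)"
proof -
  obtain j where "a j" using assms(2) by auto
  moreover have "j < k" using assms(1) \<open>a j\<close> unfolding mem_vecs_iff by auto
  ultimately show ?thesis
    unfolding nonzero_functional_def using unit_vec_in_vecs dot_unit_vec(1) by blast
qed

lemma card_vecs_dual_true_eq_false:
  assumes "\<xi> \<in> dual k" "nonzero_functional k \<xi>"
  shows "card {v\<in>vecs k. \<xi> v} = card {v\<in>vecs k. \<not> \<xi> v}"
proof -
  obtain u where u: "u \<in> vecs k" "\<xi> u" using assms(2) unfolding nonzero_functional_def by blast
  have "bij_betw (\<lambda>v. vadd v u) {v\<in>vecs k. \<xi> v} {v\<in>vecs k. \<not> \<xi> v}"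
    by (rule bij_betw_byWitness[where f' = "\<lambda>v. vadd v u"])
      (auto simp: dual_vadd[OF assms(1)] u vadd_in_vecs)
  then show ?thesis by (rule bij_betw_same_card)
qed

lemma sum_if_two_one:
  assumes "finite A"
  shows "(\<Sum>v\<in>A. if P v then 2 else 1) = 2 * real (card {v\<in>A. P v}) + real (card {v\<in>A. \<not> P v})"
proof -
  have "A \<inter> {v. P v} = {v\<in>A. P v}" "A \<inter> - {v. P v} = {v\<in>A. \<not> P v}" by auto
  then show ?thesis unfolding sum.If_cases[OF assms] by simp
qed

lemma sum_vecs_weight_dual:
  assumes "\<xi> \<in> dual k" "nonzero_functional k \<xi>"
  shows "(\<Sum>v\<in>vecs k. if \<xi> v then 2 else 1) = (3 * 2 ^ k / 2 :: real)"
    and "(\<Sum>v\<in>vecs k. if \<not> \<xi> v then 2 else 1) = (3 * 2 ^ k / 2 :: real)"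
proof -
  let ?T = "card {v\<in>vecs k. \<xi> v}" and ?F = "card {v\<in>vecs k. \<not> \<xi> v}"
  have "?T + ?F = 2 ^ k" using card_filter_add_card_filter_not[OF finite_vecs] by (simp add: card_vecs)
  then have "2 * ?T = 2 ^ k" "2 * ?F = 2 ^ k" using card_vecs_dual_true_eq_false[OF assms] by simp_all
  then have "real ?T = 2 ^ k / 2" "real ?F = 2 ^ k / 2"
    using arg_cong[where f = real] by fastforce+
  then show "(\<Sum>v\<in>vecs k. if \<xi> v then 2 else 1) = (3 * 2 ^ k / 2 :: real)"
    and "(\<Sum>v\<in>vecs k. if \<not> \<xi> v then 2 else 1) = (3 * 2 ^ k / 2 :: real)"
    by (simp_all add: sum_if_two_one)
qed

lemma sum_PiE_power_card:
  fixes x :: "'b::comm_semiring_1"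
  assumes "finite I" "finite A"
  shows "(\<Sum>z\<in>PiE I (\<lambda>_. A). x ^ card {i\<in>I. P (z i)}) = (\<Sum>v\<in>A. if P v then x else 1) ^ card I"
proof -
  have "x ^ card {i\<in>I. P (z i)} = (\<Prod>i\<in>I. if P (z i) then x else 1)" for z
  proof -
    have "I \<inter> {i. P (z i)} = {i\<in>I. P (z i)}" by auto
    then show ?thesis using assms(1) by (simp add: prod.If_cases)
  qed
  then have "(\<Sum>z\<in>PiE I (\<lambda>_. A). x ^ card {i\<in>I. P (z i)})
      = (\<Sum>z\<in>PiE I (\<lambda>_. A). \<Prod>i\<in>I. if P (z i) then x else 1)" by simp
  also have "\<dots> = (\<Prod>i\<in>I. \<Sum>v\<in>A. if P v then x else 1)"
    using assms by (intro prod_sum_PiE[symmetric]) auto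
  finally show ?thesis by simp
qed

lemma card_PiE_count_ge_bound:
  assumes "finite I" "finite A"
  shows "real (card {z\<in>PiE I (\<lambda>_. A). t \<le> real (card {i\<in>I. P (z i)})}) * 2 powr t
    \<le> (\<Sum>v\<in>A. if P v then 2 else 1) ^ card I"
proof -
  let ?X = "{z\<in>PiE I (\<lambda>_. A). t \<le> real (card {i\<in>I. P (z i)})}"
  have "real (card ?X) * 2 powr t = (\<Sum>z\<in>?X. 2 powr t)" by simp
  also have "\<dots> \<le> (\<Sum>z\<in>?X. 2 ^ card {i\<in>I. P (z i)})"
  proof (rule sum_mono)
    fix z assume "z \<in> ?X"
    then have "2 powr t \<le> 2 powr real (card {i\<in>I. P (z i)})" by (intro powr_mono) auto
    then show "2 powr t \<le> 2 ^ card {i\<in>I. P (z i)}" by (simp add: powr_realpow)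
  qed
  also have "\<dots> \<le> (\<Sum>z\<in>PiE I (\<lambda>_. A). 2 ^ card {i\<in>I. P (z i)})"
    using assms by (intro sum_mono2) (auto simp: finite_PiE)
  also have "\<dots> = (\<Sum>v\<in>A. if P v then 2 else 1) ^ card I"
    by (rule sum_PiE_power_card[OF assms])
  finally show ?thesis .
qed

definition bad_tuples :: "nat \<Rightarrow> nat \<Rightarrow> ((nat \<Rightarrow> bool) \<Rightarrow> bool) \<Rightarrow> (nat \<Rightarrow> nat \<Rightarrow> bool) set" where
  "bad_tuples n k \<xi> = {z\<in>tuples n k. real n / 4 < \<bar>S_sum n \<xi> z\<bar>}"

lemma card_bad_tuples:
  assumes "\<xi> \<in> dual k" "nonzero_functional k \<xi>"
  shows "real (card (bad_tuples n k \<xi>)) \<le> 2 * ((3 * 2 ^ k / 2) ^ n / 2 powr (5 * real n / 8))"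
proof -
  define X where "X P = {z\<in>tuples n k. 5 * real n / 8 \<le> real (card {i\<in>{0..<n}. P (z i)})}" for P
  have "bad_tuples n k \<xi> \<subseteq> X \<xi> \<union> X (\<lambda>v. \<not> \<xi> v)"
  proof
    fix z assume z: "z \<in> bad_tuples n k \<xi>"
    let ?m = "card {i\<in>{0..<n}. \<xi> (z i)}" and ?m' = "card {i\<in>{0..<n}. \<not> \<xi> (z i)}"
    have "real ?m + real ?m' = real n"
      using card_filter_add_card_filter_not[of "{0..<n}"] by (simp flip: of_nat_add)
    moreover have "real n / 4 < \<bar>real n - 2 * real ?m\<bar>"
      using z unfolding bad_tuples_def S_sum_eq_card by simp
    ultimately have "5 * real n / 8 \<le> real ?m \<or> 5 * real n / 8 \<le> real ?m'"
      by (cases "2 * real ?m \<le> real n") (simp_all add: abs_if)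
    then show "z \<in> X \<xi> \<union> X (\<lambda>v. \<not> \<xi> v)" using z unfolding X_def bad_tuples_def by auto
  qed
  then have "card (bad_tuples n k \<xi>) \<le> card (X \<xi> \<union> X (\<lambda>v. \<not> \<xi> v))"
    by (intro card_mono) (auto simp: X_def)
  also have "\<dots> \<le> card (X \<xi>) + card (X (\<lambda>v. \<not> \<xi> v))" by (rule card_Un_le)
  finally have "real (card (bad_tuples n k \<xi>)) \<le> real (card (X \<xi>)) + real (card (X (\<lambda>v. \<not> \<xi> v)))"
    by (simp flip: of_nat_add)
  also have "\<dots> \<le> 2 * ((3 * 2 ^ k / 2) ^ n / 2 powr (5 * real n / 8))"
  proof -
    have each: "real (card (X P)) \<le> (3 * 2 ^ k / 2) ^ n / 2 powr (5 * real n / 8)"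
      if "(\<Sum>v\<in>vecs k. if P v then 2 else 1) = (3 * 2 ^ k / 2 :: real)" for P
      using card_PiE_count_ge_bound[of "{0..<n}" "vecs k" "5 * real n / 8" P] that
      unfolding X_def tuples_def by (simp add: pos_le_divide_eq)
    show ?thesis
      using each[OF sum_vecs_weight_dual(1)[OF assms]] each[OF sum_vecs_weight_dual(2)[OF assms]]
      by linarith
  qed
  finally show ?thesis .
qed

lemma exp_decay_bound:
  fixes n k :: nat
  assumes "1 \<le> k" "real k \<le> 1/200 * real n"
  shows "2 ^ (k + 1) * ((3 / 2) ^ n / 2 powr (5 * real n / 8)) \<le> exp (- (1/100) * real n)"
proof -
  have "8 * ln (3/2) - 5 * ln 2 = ln ((3/2) ^ 8) - ln (2 ^ 5 :: real)"
    by (subst (1 2) ln_realpow) simp_all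
  also have "\<dots> = ln ((3/2) ^ 8 / 2 ^ 5)" by (rule ln_divide_pos[symmetric]) simp_all
  also have "\<dots> \<le> (3/2) ^ 8 / 2 ^ 5 - 1" by (rule ln_le_minus_one) simp
  also have "\<dots> = - 1631 / 8192" by (simp add: power_divide)
  finally have contraction: "8 * ln (3/2) - 5 * ln 2 \<le> - (1/6 :: real)" by simp
  have "2 ^ (k + 1) = exp (real (k + 1) * ln 2)" "(3 / 2) ^ n = exp (real n * ln (3 / 2))"
    by (subst exp_of_nat_mult; simp)+
  moreover have "2 powr (5 * real n / 8) = exp (5 * real n / 8 * ln 2)" by (simp add: powr_def)
  ultimately have "2 ^ (k + 1) * ((3 / 2) ^ n / 2 powr (5 * real n / 8))
      = exp (real (k + 1) * ln 2 + (real n * ln (3 / 2) - 5 * real n / 8 * ln 2))"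
    by (simp add: exp_add exp_diff)
  also have "\<dots> \<le> exp (- (1/100) * real n)"
  proof -
    have "real (k + 1) * ln 2 \<le> real (k + 1)"
      using mult_left_mono[of "ln 2" 1 "real (k + 1)"] ln_2_less_1 by simp
    moreover have "real (k + 1) \<le> 2 * real k" using assms(1) by simp
    moreover have "real n * ln (3 / 2) - 5 * real n / 8 * ln 2 \<le> - real n / 48"
      using mult_left_mono[OF contraction, of "real n"] by (simp add: algebra_simps)
    ultimately show ?thesis unfolding exp_le_cancel_iff using assms(2) by linarith
  qed
  finally show ?thesis .
qed

lemma tuples_diff_G_tr_subset:
  assumes "0 < n"
  shows "tuples n k - G_tr n k \<subseteq> (\<Union>a\<in>vecs k - {zero_vec}. bad_tuples n k (dot a))"
proof
  fix z assume z: "z \<in> tuples n k - G_tr n k"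
  show "z \<in> (\<Union>a\<in>vecs k - {zero_vec}. bad_tuples n k (dot a))"
  proof (cases "z \<in> St n k")
    case False
    then obtain a where a: "a \<in> vecs k - {zero_vec}" "annihilates a {0..<n} z"
      using annihilator_if_not_St z by blast
    then have "S_sum n (dot a) z = real n" unfolding annihilates_def S_sum_eq_card by simp
    then have "z \<in> bad_tuples n k (dot a)" using z assms unfolding bad_tuples_def by auto
    then show ?thesis using a(1) by blast
  next
    case True
    then obtain \<xi> where "\<xi> \<in> dual k" "nonzero_functional k \<xi>" "real n / 4 < \<bar>S_sum n \<xi> z\<bar>"
      using z unfolding G_tr_def by auto
    then show ?thesis
      using z S_sum_dual_vec dual_vec_in_vecs dual_vec_nonzero unfolding bad_tuples_def by fastforce
  qed
qed

lemma card_tuples_diff_G_tr: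
  assumes "0 < n"
  shows "real (card (tuples n k - G_tr n k)) \<le> 2 ^ k * (2 * ((3 * 2 ^ k / 2) ^ n / 2 powr (5 * real n / 8)))"
    (is "_ \<le> _ * ?B")
proof -
  have "card (tuples n k - G_tr n k) \<le> card (\<Union>a\<in>vecs k - {zero_vec}. bad_tuples n k (dot a))"
    using tuples_diff_G_tr_subset[OF assms] by (intro card_mono) (auto simp: bad_tuples_def)
  also have "\<dots> \<le> (\<Sum>a\<in>vecs k - {zero_vec}. card (bad_tuples n k (dot a)))"
    by (rule card_UN_le) simp
  finally have "real (card (tuples n k - G_tr n k)) \<le> (\<Sum>a\<in>vecs k - {zero_vec}. real (card (bad_tuples n k (dot a))))"
    by (simp flip: of_nat_sum)
  also have "\<dots> \<le> (\<Sum>a\<in>vecs k - {zero_vec}. ?B)"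
    by (intro sum_mono card_bad_tuples dot_in_dual nonzero_functional_dot) auto
  also have "\<dots> \<le> 2 ^ k * ?B"
  proof -
    have "card (vecs k - {zero_vec}) \<le> card (vecs k)" by (rule card_Diff1_le)
    then have "real (card (vecs k - {zero_vec})) \<le> 2 ^ k"
      unfolding card_vecs by (metis of_nat_le_iff of_nat_numeral of_nat_power)
    moreover have "0 \<le> ?B" by simp
    ultimately show ?thesis unfolding sum_constant by (rule mult_right_mono)
  qed
  finally show ?thesis .
qed

lemma mu_Gc_eq: "mu_Gc n k = real (card (tuples n k - G_tr n k)) / real (card (tuples n k))"
proof -
  have "G_tr n k \<subseteq> tuples n k" unfolding G_tr_def St_def by auto
  then have "card (tuples n k - G_tr n k) = card (tuples n k) - card (G_tr n k)"
    "card (G_tr n k) \<le> card (tuples n k)"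
    by (auto intro: card_Diff_subset card_mono finite_subset[OF _ finite_tuples])
  moreover have "card (tuples n k) \<noteq> 0" by (simp add: card_tuples)
  ultimately show ?thesis unfolding mu_Gc_def by (simp add: of_nat_diff diff_divide_distrib del: card_0_eq)
qed

lemma mu_Gc_le:
  assumes "0 < n"
  shows "mu_Gc n k \<le> 2 ^ (k + 1) * ((3 / 2) ^ n / 2 powr (5 * real n / 8))"
proof -
  have "(3 * 2 ^ k / 2) ^ n = (2 ^ k * (3 / 2 :: real)) ^ n" by (rule arg_cong[where f = "\<lambda>x. x ^ n"]) simp
  also have "\<dots> = (2 ^ k) ^ n * (3 / 2) ^ n" by (rule power_mult_distrib)
  finally have "(3 * 2 ^ k / 2) ^ n = (2 ^ k) ^ n * (3 / 2 :: real) ^ n" .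
  then show ?thesis
    using card_tuples_diff_G_tr[OF assms, of k]
    unfolding mu_Gc_eq card_tuples by (simp add: divide_simps)
qed

lemma pi_Gc_le_mu_Gc: "pi_Gc n k \<le> mu_Gc n k"
proof -
  have "G_tr n k \<subseteq> St n k" "St n k \<subseteq> tuples n k" unfolding G_tr_def St_def by auto
  then have "card (G_tr n k) \<le> card (St n k)" "card (St n k) \<le> card (tuples n k)"
    by (auto intro: card_mono finite_subset[OF _ finite_tuples])
  then show ?thesis unfolding pi_Gc_def mu_Gc_def by (cases "card (St n k) = 0") (simp_all add: frac_le)
qed

theorem lemma3p1:
  shows "\<exists>\<epsilon>0>0. \<exists>c0>0. \<forall>n k. 1 \<le> k \<longrightarrow> real k \<le> \<epsilon>0 * real n \<longrightarrow>
           pi_Gc n k \<le> exp (- c0 * real n) \<and> mu_Gc n k \<le> exp (- c0 * real n)"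
proof -
  have "pi_Gc n k \<le> exp (- (1/100) * real n) \<and> mu_Gc n k \<le> exp (- (1/100) * real n)"
    if k: "1 \<le> k" "real k \<le> 1/200 * real n" for n k :: nat
  proof -
    have "0 < n" using k by (cases n) auto
    then have "mu_Gc n k \<le> exp (- (1/100) * real n)"
      using mu_Gc_le exp_decay_bound[OF k] order_trans by blast
    then show ?thesis using pi_Gc_le_mu_Gc order_trans by blast
  qed
  then show ?thesis by (intro exI[of _ "1/200"] conjI exI[of _ "1/100"]) simp_all
qed

end
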